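(* $\displaystyle\lim_{N\to\infty,\ N\text{ even}}\frac{m^*_N}{2^{(N-1)/2}}=1.$ In particular, for large even $N$, quantum correlations certifying $N$ bits of device-independent randomness (via the strategies $S_{\theta^*_N}$ and expressions $I_{\theta^*_N}$) achieve MABK values arbitrarily close (in ratio) to the maximal quantum value $2^{(N-1)/2}$.
   Context: For even $N$: $\theta^*_N=2\pi t_N/(N+1)$ with $t_N=N/4+1/2,\ N/4,\ 3N/4+1/2,\ 3N/4+1$ according as $N\equiv2,4,6,0\pmod 8$, and $m^*_N=\langle M_N(\theta^*_N)\rangle$ where $\langle M_N(\theta)\rangle=2^{\frac{N-1}2}\big(\cos^N(\theta/2+\pi/4)\sin(N\theta/2+\pi/4)+\cos^N(\theta/2-\pi/4)\sin(N\theta/2-\pi/4)\big)$ is the MABK value of the strategy $S_\theta$ (state $(|0\rangle^{\otimes N}+i|1\rangle^{\otimes N})/\sqrt2$, $A_0^{(k)}=\sigma_X$, $A^{(k)}_1=\cos\theta\sigma_X+\sin\theta\sigma_Y$). The maximal quantum MABK value is $2^{(N-1)/2}$. *)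

theory Defs
  imports "HOL-Analysis.Analysis"
begin

definition mabk_value :: "nat \<Rightarrow> real \<Rightarrow> real" where
  "mabk_value N \<theta> = 2 powr ((real N - 1) / 2) *
     ((cos (\<theta>/2 + pi/4)) ^ N * sin (real N * \<theta> / 2 + pi/4)
    + (cos (\<theta>/2 - pi/4)) ^ N * sin (real N * \<theta> / 2 - pi/4))"

definition t_opt :: "nat \<Rightarrow> real" where
  "t_opt N =
     (if N mod 8 = 2 then real N / 4 + 1/2
      else if N mod 8 = 4 then real N / 4
      else if N mod 8 = 6 then 3 * real N / 4 + 1/2
      else 3 * real N / 4 + 1)"

definition theta_opt :: "nat \<Rightarrow> real" where
  "theta_opt N = 2 * pi * t_opt N / (real N + 1)"

definition m_opt :: "nat \<Rightarrow> real" where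
  "m_opt N = mabk_value N (theta_opt N)"

end

theory Submission
  imports Defs "HOL-Real_Asymp.Real_Asymp"
begin

text \<open>
  For even \<open>N\<close> the angle \<open>\<theta>\<^sup>*\<^sub>N\<close> lies at distance \<open>2\<delta>\<close>, where \<open>\<delta> = \<pi>/(4(N+1))\<close>,
  from \<open>\<pi>/2\<close> or \<open>3\<pi>/2\<close>. Since \<open>(N+1)\<delta> = \<pi>/4\<close>, reducing the angles in the MABK
  formula modulo \<open>2\<pi>\<close> collapses the normalized value to \<open>cos\<^bsup>N+1\<^esup> \<delta> \<plusminus> sin\<^bsup>N+1\<^esup> \<delta>\<close>.
  As \<open>\<delta> \<sim> \<pi>/(4N)\<close>, the first term tends to \<open>1\<close> and the second to \<open>0\<close>.
\<close>

definition m_opt_normalized :: "nat \<Rightarrow> real" where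
  "m_opt_normalized N = m_opt N / 2 powr ((real N - 1) / 2)"

definition opt_delta :: "nat \<Rightarrow> real" where
  "opt_delta N = pi / (4 * (real N + 1))"

lemma pi_eq_opt_delta: "pi = 4 * (real N + 1) * opt_delta N"
  by (simp add: opt_delta_def)

lemma m_opt_normalized_reduce:
  fixes k l :: int
  assumes "theta_opt N / 2 + pi / 4 = a" and "theta_opt N / 2 - pi / 4 = b"
    and "real N * theta_opt N / 2 + pi / 4 = x + 2 * pi * of_int k"
    and "real N * theta_opt N / 2 - pi / 4 = y + 2 * pi * of_int l"
  shows "m_opt_normalized N = cos a ^ N * sin x + cos b ^ N * sin y"
  unfolding m_opt_normalized_def m_opt_def mabk_value_def assms
  by (simp add: sin_add)

lemma m_opt_normalized_8k_plus_2:
  assumes N: "N = 8 * k + 2"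
  shows "m_opt_normalized N = cos (opt_delta N) ^ (N + 1) + sin (opt_delta N) ^ (N + 1)"
proof -
  define d where "d = opt_delta N"
  have "even N"
    using N by simp
  have real_N: "real N = 8 * real k + 2"
    using N by simp
  have pi: "pi = 4 * (8 * real k + 3) * d"
    using pi_eq_opt_delta[of N] unfolding d_def N by (simp add: algebra_simps)
  have "N mod 8 = 2"
    using N by presburger
  then have theta: "theta_opt N = pi / 2 + 2 * d"
    unfolding theta_opt_def t_opt_def d_def opt_delta_def by (simp add: field_simps)
  have "m_opt_normalized N = cos (pi / 2 + d) ^ N * sin (pi - d) + cos d ^ N * sin (pi / 2 - d)"
    by (rule m_opt_normalized_reduce[where k = "int k" and l = "int k"])
      (simp_all add: theta real_N pi field_simps)
  also have "\<dots> = cos d ^ (N + 1) + sin d ^ (N + 1)"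
    using \<open>even N\<close> by (simp add: sin_add cos_add sin_diff cos_diff power_minus_even)
  finally show ?thesis unfolding d_def .
qed

lemma m_opt_normalized_8k_plus_4:
  assumes N: "N = 8 * k + 4"
  shows "m_opt_normalized N = cos (opt_delta N) ^ (N + 1) - sin (opt_delta N) ^ (N + 1)"
proof -
  define d where "d = opt_delta N"
  have "even N"
    using N by simp
  have real_N: "real N = 8 * real k + 4"
    using N by simp
  have pi: "pi = 4 * (8 * real k + 5) * d"
    using pi_eq_opt_delta[of N] unfolding d_def N by (simp add: algebra_simps)
  have "N mod 8 = 4"
    using N by presburger
  then have theta: "theta_opt N = pi / 2 - 2 * d"
    unfolding theta_opt_def t_opt_def d_def opt_delta_def by (simp add: field_simps)
  have "m_opt_normalized N = cos (pi / 2 - d) ^ N * sin (pi + d) + cos (- d) ^ N * sin (pi / 2 + d)"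
    by (rule m_opt_normalized_reduce[where k = "int k" and l = "int k"])
      (simp_all add: theta real_N pi field_simps)
  also have "\<dots> = cos d ^ (N + 1) - sin d ^ (N + 1)"
    using \<open>even N\<close> by (simp add: sin_add cos_add sin_diff cos_diff power_minus_even)
  finally show ?thesis unfolding d_def .
qed

lemma m_opt_normalized_8k_plus_6:
  assumes N: "N = 8 * k + 6"
  shows "m_opt_normalized N = cos (opt_delta N) ^ (N + 1) + sin (opt_delta N) ^ (N + 1)"
proof -
  define d where "d = opt_delta N"
  have "even N"
    using N by simp
  have real_N: "real N = 8 * real k + 6"
    using N by simp
  have pi: "pi = 4 * (8 * real k + 7) * d"
    using pi_eq_opt_delta[of N] unfolding d_def N by (simp add: algebra_simps)
  have "N mod 8 = 6"
    using N by presburger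
  then have theta: "theta_opt N = 3 * pi / 2 - 2 * d"
    unfolding theta_opt_def t_opt_def d_def opt_delta_def by (simp add: field_simps)
  have "m_opt_normalized N = cos (pi - d) ^ N * sin (pi / 2 + d) + cos (pi / 2 - d) ^ N * sin d"
    by (rule m_opt_normalized_reduce[where k = "int (3 * k + 2)" and l = "int (3 * k + 2)"])
      (simp_all add: theta real_N pi field_simps)
  also have "\<dots> = cos d ^ (N + 1) + sin d ^ (N + 1)"
    using \<open>even N\<close> by (simp add: sin_add cos_add sin_diff cos_diff power_minus_even)
  finally show ?thesis unfolding d_def .
qed

lemma m_opt_normalized_8k:
  assumes N: "N = 8 * k"
  shows "m_opt_normalized N = cos (opt_delta N) ^ (N + 1) - sin (opt_delta N) ^ (N + 1)"
proof -
  define d where "d = opt_delta N"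
  have "even N"
    using N by simp
  have real_N: "real N = 8 * real k"
    using N by simp
  have pi: "pi = 4 * (8 * real k + 1) * d"
    using pi_eq_opt_delta[of N] unfolding d_def N by (simp add: algebra_simps)
  have "N mod 8 = 0"
    using N by presburger
  then have theta: "theta_opt N = 3 * pi / 2 + 2 * d"
    unfolding theta_opt_def t_opt_def d_def opt_delta_def by (simp add: field_simps)
  have "m_opt_normalized N = cos (pi + d) ^ N * sin (pi / 2 - d) + cos (pi / 2 + d) ^ N * sin (- d)"
    by (rule m_opt_normalized_reduce[where k = "int (3 * k)" and l = "int (3 * k)"])
      (simp_all add: theta real_N pi field_simps)
  also have "\<dots> = cos d ^ (N + 1) - sin d ^ (N + 1)"
    using \<open>even N\<close> by (simp add: sin_add cos_add sin_diff cos_diff power_minus_even)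
  finally show ?thesis unfolding d_def .
qed

lemma sin_opt_delta_nonneg: "0 \<le> sin (opt_delta N)"
  by (rule sin_ge_zero) (auto simp: opt_delta_def field_simps)

lemma m_opt_normalized_even:
  assumes "even N"
  shows "\<bar>m_opt_normalized N - cos (opt_delta N) ^ (N + 1)\<bar> = sin (opt_delta N) ^ (N + 1)"
proof -
  define k where "k = N div 8"
  have "N = 8 * k \<or> N = 8 * k + 2 \<or> N = 8 * k + 4 \<or> N = 8 * k + 6"
    using assms unfolding k_def by presburger
  then have "m_opt_normalized N = cos (opt_delta N) ^ (N + 1) + sin (opt_delta N) ^ (N + 1) \<or>
      m_opt_normalized N = cos (opt_delta N) ^ (N + 1) - sin (opt_delta N) ^ (N + 1)"
    using m_opt_normalized_8k m_opt_normalized_8k_plus_2 m_opt_normalized_8k_plus_4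
      m_opt_normalized_8k_plus_6 by blast
  then show ?thesis
    using sin_opt_delta_nonneg[of N] by auto
qed

theorem proposition6:
  shows "((\<lambda>n::nat. m_opt (2 * n) / 2 powr ((real (2 * n) - 1) / 2)) \<longlongrightarrow> 1) sequentially"
proof -
  have cos_lim: "(\<lambda>n. cos (opt_delta (2 * n)) ^ (2 * n + 1)) \<longlonglongrightarrow> 1"
    unfolding opt_delta_def by real_asymp
  have sin_lim: "(\<lambda>n. sin (opt_delta (2 * n)) ^ (2 * n + 1)) \<longlonglongrightarrow> 0"
    unfolding opt_delta_def by real_asymp
  have "norm (m_opt_normalized (2 * n) - cos (opt_delta (2 * n)) ^ (2 * n + 1))
      \<le> sin (opt_delta (2 * n)) ^ (2 * n + 1)" for n
    using m_opt_normalized_even[of "2 * n"] by simp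
  then have "(\<lambda>n. m_opt_normalized (2 * n) - cos (opt_delta (2 * n)) ^ (2 * n + 1)) \<longlonglongrightarrow> 0"
    by (intro Lim_null_comparison[OF always_eventually sin_lim] allI)
  from tendsto_add[OF this cos_lim] show ?thesis
    by (simp add: m_opt_normalized_def)
qed

end
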